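(* Let $X$ be a real Banach space, $Y$ a (closed linear) subspace of $X$, $F=\{x_1,\dots,x_N\}$ a finite subset of $X$, $f:[0,\infty)^N\to[0,\infty)$ a monotone function, and $\varepsilon>0$. Then: (a) $\mathrm{rad}_Y^f(F)=\inf\{r_f(y,F): y\in\bigcup_{i=1}^N B[x_i,\mathrm{rad}_Y(F)+\varepsilon]\cap Y\}=\inf\{r_f(y,F): y\in Y,\ \|y\|\le\max_{1\le i\le N}\|x_i\|+\mathrm{rad}_Y(F)+\varepsilon\}$; (b) if $f$ is weakly strictly monotone, then $\mathrm{Cent}_Y^f(F)\subseteq\bigcup_{i=1}^N B[x_i,\mathrm{rad}_Y(F)+\varepsilon]\cap Y$; (c) if $f$ is weakly strictly monotone, then $\mathrm{Cent}_Y^f(F)\subseteq\bigcap_{i=1}^N B[x_i,\mathrm{rad}_Y(F)+\mathrm{diam}(F)+\varepsilon]\cap Y$.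
   Context: $B[x,r]$ is the closed ball with center $x$ and radius $r$. $f$ is monotone if $a\le b$ coordinatewise implies $f(a)\le f(b)$, weakly strictly monotone if monotone and $a_i<b_i$ for all $i$ implies $f(a)<f(b)$. $r_f(x,F)=f(\|x-x_1\|,\dots,\|x-x_N\|)$, $\mathrm{rad}_Y^f(F)=\inf_{y\in Y}r_f(y,F)$, $\mathrm{Cent}_Y^f(F)=\{y\in Y:r_f(y,F)=\mathrm{rad}_Y^f(F)\}$, and $\mathrm{rad}_Y(F)=\inf_{y\in Y}\max_{1\le i\le N}\|y-x_i\|$ is the restricted Chebyshev radius. *)

theory Defs
  imports "HOL-Analysis.Analysis"
begin

text \<open>The finite family F = {x_1,...,x_N} is given as a nonempty list xs of length N;
  f : [0,oo)^N -> [0,oo) is a function on real lists, only its behaviour on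
  nonnegative lists of length N matters.\<close>

definition nonneg_vec :: "nat \<Rightarrow> real list \<Rightarrow> bool" where
  "nonneg_vec N a \<longleftrightarrow> length a = N \<and> (\<forall>i<N. 0 \<le> a ! i)"

definition maps_nonneg :: "nat \<Rightarrow> (real list \<Rightarrow> real) \<Rightarrow> bool" where
  "maps_nonneg N f \<longleftrightarrow> (\<forall>a. nonneg_vec N a \<longrightarrow> 0 \<le> f a)"

definition monotone_fn :: "nat \<Rightarrow> (real list \<Rightarrow> real) \<Rightarrow> bool" where
  "monotone_fn N f \<longleftrightarrow> (\<forall>a b. nonneg_vec N a \<and> nonneg_vec N b \<and> (\<forall>i<N. a ! i \<le> b ! i)
      \<longrightarrow> f a \<le> f b)"

definition weakly_strictly_monotone_fn :: "nat \<Rightarrow> (real list \<Rightarrow> real) \<Rightarrow> bool" where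
  "weakly_strictly_monotone_fn N f \<longleftrightarrow> monotone_fn N f \<and>
     (\<forall>a b. nonneg_vec N a \<and> nonneg_vec N b \<and> (\<forall>i<N. a ! i < b ! i) \<longrightarrow> f a < f b)"

definition r_f :: "(real list \<Rightarrow> real) \<Rightarrow> 'a::real_normed_vector \<Rightarrow> 'a list \<Rightarrow> real" where
  "r_f f x xs = f (map (\<lambda>xi. norm (x - xi)) xs)"

definition rad_f :: "(real list \<Rightarrow> real) \<Rightarrow> 'a::real_normed_vector set \<Rightarrow> 'a list \<Rightarrow> real" where
  "rad_f f Y xs = (INF y\<in>Y. r_f f y xs)"

definition Cent_f :: "(real list \<Rightarrow> real) \<Rightarrow> 'a::real_normed_vector set \<Rightarrow> 'a list \<Rightarrow> 'a set" where
  "Cent_f f Y xs = {y \<in> Y. r_f f y xs = rad_f f Y xs}"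

definition cheb_rad :: "'a::real_normed_vector set \<Rightarrow> 'a list \<Rightarrow> real" where
  "cheb_rad Y xs = (INF y\<in>Y. Max ((\<lambda>xi. norm (y - xi)) ` set xs))"

end

theory Submission
  imports Defs
begin

text \<open>Since \<open>rad_Y(F) < rad_Y(F) + \<epsilon>\<close>, some \<open>y\<^sub>0 \<in> Y\<close> lies at distance less than
  \<open>rad_Y(F) + \<epsilon>\<close> from every \<open>x\<^sub>i\<close>. A point of \<open>Y\<close> outside all the balls
  \<open>B[x\<^sub>i, rad_Y(F) + \<epsilon>]\<close> is farther than \<open>y\<^sub>0\<close> from every \<open>x\<^sub>i\<close>, so by monotonicity of \<open>f\<close>
  it does no better than \<open>y\<^sub>0\<close>, and strictly worse if \<open>f\<close> is weakly strictly monotone.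
  Hence the infimum may be taken over the union of the balls, and centres lie in it;
  the norm bound and the bound by \<open>diam(F)\<close> follow from the triangle inequality.\<close>

lemma cINF_eq_between:
  fixes g :: "'a \<Rightarrow> 'b::conditionally_complete_lattice"
  assumes "A \<subseteq> B" and "B \<subseteq> C" and "A \<noteq> {}" and "bdd_below (g ` C)"
    and "(INF y\<in>C. g y) = (INF y\<in>A. g y)"
  shows "(INF y\<in>B. g y) = (INF y\<in>A. g y)"
proof (rule antisym)
  have "bdd_below (g ` B)"
    using assms(2,4) by (meson bdd_below_mono image_mono)
  then show "(INF y\<in>B. g y) \<le> (INF y\<in>A. g y)"
    using assms(1,3) by (intro cINF_superset_mono) auto
  have "(INF y\<in>C. g y) \<le> (INF y\<in>B. g y)"
    using assms by (intro cINF_superset_mono) auto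
  then show "(INF y\<in>A. g y) \<le> (INF y\<in>B. g y)"
    using assms(5) by simp
qed

lemma union_cball_subset_norm_le:
  fixes S :: "'a::real_normed_vector set"
  assumes "finite S"
  shows "(\<Union>x\<in>S. cball x r) \<subseteq> {y. norm y \<le> Max (norm ` S) + r}"
proof
  fix y assume "y \<in> (\<Union>x\<in>S. cball x r)"
  then obtain x where x: "x \<in> S" "norm (x - y) \<le> r"
    by (auto simp: dist_norm)
  have "norm y \<le> norm x + norm (x - y)"
    using norm_triangle_ineq4[of x "x - y"] by simp
  moreover have "norm x \<le> Max (norm ` S)"
    using x(1) assms by simp
  ultimately show "y \<in> {y. norm y \<le> Max (norm ` S) + r}"
    using x(2) by simp
qed

lemma union_cball_subset_Inter_cball:
  fixes S :: "'a::metric_space set"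
  assumes "bounded S"
  shows "(\<Union>x\<in>S. cball x r) \<subseteq> (\<Inter>x\<in>S. cball x (r + diameter S))"
proof clarsimp
  fix x y z assume "x \<in> S" "dist x y \<le> r" "z \<in> S"
  moreover have "dist z x \<le> diameter S"
    using assms \<open>z \<in> S\<close> \<open>x \<in> S\<close> by (rule diameter_bounded_bound)
  ultimately show "dist z y \<le> r + diameter S"
    using dist_triangle[of z y x] by linarith
qed

lemma nonneg_vec_dists: "nonneg_vec (length xs) (map (\<lambda>xi. norm (y - xi)) xs)"
  by (simp add: nonneg_vec_def)

lemma r_f_nonneg:
  assumes "maps_nonneg (length xs) f"
  shows "0 \<le> r_f f y xs"
  using assms nonneg_vec_dists unfolding maps_nonneg_def r_f_def by blast

lemma bdd_below_r_f:
  assumes "maps_nonneg (length xs) f"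
  shows "bdd_below ((\<lambda>y. r_f f y xs) ` S)"
  using r_f_nonneg[OF assms] by (intro bdd_belowI2)

lemma r_f_mono:
  assumes "monotone_fn (length xs) f"
    and "\<And>x. x \<in> set xs \<Longrightarrow> norm (a - x) \<le> norm (b - x)"
  shows "r_f f a xs \<le> r_f f b xs"
  using assms nonneg_vec_dists[of xs a] nonneg_vec_dists[of xs b]
  unfolding monotone_fn_def r_f_def by (simp add: nth_mem)

lemma r_f_strict_mono:
  assumes "weakly_strictly_monotone_fn (length xs) f"
    and "\<And>x. x \<in> set xs \<Longrightarrow> norm (a - x) < norm (b - x)"
  shows "r_f f a xs < r_f f b xs"
  using assms nonneg_vec_dists[of xs a] nonneg_vec_dists[of xs b]
  unfolding weakly_strictly_monotone_fn_def r_f_def by (simp add: nth_mem)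

lemma cheb_rad_less_imp_ex:
  assumes "Y \<noteq> {}" and "xs \<noteq> []" and "cheb_rad Y xs < r"
  obtains y0 where "y0 \<in> Y" and "\<And>x. x \<in> set xs \<Longrightarrow> norm (y0 - x) < r"
proof -
  have "bdd_below ((\<lambda>y. Max ((\<lambda>xi. norm (y - xi)) ` set xs)) ` Y)"
    using assms(2) by (intro bdd_belowI2[where m = 0]) (simp add: Max_ge_iff ex_in_conv)
  then obtain y0 where "y0 \<in> Y" "Max ((\<lambda>xi. norm (y0 - xi)) ` set xs) < r"
    using assms unfolding cheb_rad_def by (auto simp: cINF_less_iff)
  then show thesis
    using assms(2) by (intro that) (auto simp: Max_less_iff)
qed

lemma dists_less_imp_in_balls:
  assumes "xs \<noteq> []" and "\<And>x. x \<in> set xs \<Longrightarrow> norm (y - x) < r"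
  shows "y \<in> (\<Union>x\<in>set xs. cball x r)"
proof -
  have "dist (hd xs) y \<le> r"
    using assms(2)[OF hd_in_set[OF assms(1)]] by (simp add: dist_norm norm_minus_commute)
  then show ?thesis
    using assms(1) by auto
qed

lemma r_f_outside_balls_ge:
  assumes "monotone_fn (length xs) f"
    and "\<And>x. x \<in> set xs \<Longrightarrow> norm (y0 - x) < r"
    and "y \<notin> (\<Union>x\<in>set xs. cball x r)"
  shows "r_f f y0 xs \<le> r_f f y xs"
proof (rule r_f_mono[OF assms(1)])
  fix x assume "x \<in> set xs"
  then show "norm (y0 - x) \<le> norm (y - x)"
    using assms(2)[of x] assms(3) by (auto simp: dist_norm norm_minus_commute)
qed

lemma r_f_outside_balls_gt:
  assumes "weakly_strictly_monotone_fn (length xs) f"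
    and "\<And>x. x \<in> set xs \<Longrightarrow> norm (y0 - x) < r"
    and "y \<notin> (\<Union>x\<in>set xs. cball x r)"
  shows "r_f f y0 xs < r_f f y xs"
proof (rule r_f_strict_mono[OF assms(1)])
  fix x assume "x \<in> set xs"
  then show "norm (y0 - x) < norm (y - x)"
    using assms(2)[of x] assms(3) by (auto simp: dist_norm norm_minus_commute)
qed

lemma rad_f_eq_INF_balls:
  assumes "maps_nonneg (length xs) f" and "monotone_fn (length xs) f"
    and "Y \<noteq> {}" and "xs \<noteq> []" and "cheb_rad Y xs < r"
  shows "rad_f f Y xs = (INF y\<in>(\<Union>x\<in>set xs. cball x r) \<inter> Y. r_f f y xs)"
proof -
  let ?A = "(\<Union>x\<in>set xs. cball x r) \<inter> Y"
  obtain y0 where y0: "y0 \<in> Y" "\<And>x. x \<in> set xs \<Longrightarrow> norm (y0 - x) < r"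
    using cheb_rad_less_imp_ex[OF assms(3-5)] by blast
  have "y0 \<in> ?A"
    using dists_less_imp_in_balls[OF assms(4) y0(2)] y0(1) by blast
  have "(INF y\<in>?A. r_f f y xs) \<le> (INF y\<in>Y. r_f f y xs)"
  proof (rule cINF_mono[OF assms(3) bdd_below_r_f[OF assms(1)]])
    fix y assume "y \<in> Y"
    show "\<exists>z\<in>?A. r_f f z xs \<le> r_f f y xs"
    proof (cases "y \<in> ?A")
      case True
      then show ?thesis by blast
    next
      case False
      then show ?thesis
        using \<open>y0 \<in> ?A\<close> \<open>y \<in> Y\<close> r_f_outside_balls_ge[OF assms(2) y0(2)] by blast
    qed
  qed
  moreover have "(INF y\<in>Y. r_f f y xs) \<le> (INF y\<in>?A. r_f f y xs)"
    using \<open>y0 \<in> ?A\<close> by (intro cINF_superset_mono bdd_below_r_f[OF assms(1)]) blast+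
  ultimately show ?thesis
    unfolding rad_f_def by (rule antisym[rotated])
qed

lemma Cent_f_subset_balls:
  assumes "maps_nonneg (length xs) f" and "weakly_strictly_monotone_fn (length xs) f"
    and "Y \<noteq> {}" and "xs \<noteq> []" and "cheb_rad Y xs < r"
  shows "Cent_f f Y xs \<subseteq> (\<Union>x\<in>set xs. cball x r) \<inter> Y"
proof
  fix y assume y: "y \<in> Cent_f f Y xs"
  obtain y0 where y0: "y0 \<in> Y" "\<And>x. x \<in> set xs \<Longrightarrow> norm (y0 - x) < r"
    using cheb_rad_less_imp_ex[OF assms(3-5)] by blast
  have "r_f f y xs \<le> r_f f y0 xs"
    using y y0(1) bdd_below_r_f[OF assms(1)] unfolding Cent_f_def rad_f_def
    by (auto intro: cINF_lower)
  then have "y \<in> (\<Union>x\<in>set xs. cball x r)"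
    using r_f_outside_balls_gt[OF assms(2) y0(2)] by (meson not_le)
  then show "y \<in> (\<Union>x\<in>set xs. cball x r) \<inter> Y"
    using y unfolding Cent_f_def by blast
qed

theorem proposition4p2:
  fixes Y :: "'a::banach set" and xs :: "'a list" and f :: "real list \<Rightarrow> real" and \<epsilon> :: real
  assumes "subspace Y" and "closed Y"
    and "xs \<noteq> []"
    and "maps_nonneg (length xs) f"
    and "monotone_fn (length xs) f"
    and "\<epsilon> > 0"
  shows "rad_f f Y xs = (INF y\<in>(\<Union>x\<in>set xs. cball x (cheb_rad Y xs + \<epsilon>)) \<inter> Y. r_f f y xs)
       \<and> (INF y\<in>(\<Union>x\<in>set xs. cball x (cheb_rad Y xs + \<epsilon>)) \<inter> Y. r_f f y xs)
         = (INF y\<in>{y \<in> Y. norm y \<le> Max (norm ` set xs) + cheb_rad Y xs + \<epsilon>}. r_f f y xs)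
       \<and> (weakly_strictly_monotone_fn (length xs) f \<longrightarrow>
           Cent_f f Y xs \<subseteq> (\<Union>x\<in>set xs. cball x (cheb_rad Y xs + \<epsilon>)) \<inter> Y)
       \<and> (weakly_strictly_monotone_fn (length xs) f \<longrightarrow>
           Cent_f f Y xs \<subseteq> (\<Inter>x\<in>set xs. cball x (cheb_rad Y xs + diameter (set xs) + \<epsilon>)) \<inter> Y)"
proof -
  let ?r = "cheb_rad Y xs + \<epsilon>"
  let ?A = "(\<Union>x\<in>set xs. cball x ?r) \<inter> Y"
  let ?B = "{y \<in> Y. norm y \<le> Max (norm ` set xs) + cheb_rad Y xs + \<epsilon>}"
  have "Y \<noteq> {}" using assms(1) subspace_0 by blast
  have "cheb_rad Y xs < ?r" using assms(6) by simp
  note near = \<open>Y \<noteq> {}\<close> assms(3) this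
  have rad: "rad_f f Y xs = (INF y\<in>?A. r_f f y xs)"
    using rad_f_eq_INF_balls[OF assms(4,5) near] .
  obtain y0 where "y0 \<in> Y" "\<And>x. x \<in> set xs \<Longrightarrow> norm (y0 - x) < ?r"
    using cheb_rad_less_imp_ex[OF near] by blast
  then have "?A \<noteq> {}"
    using dists_less_imp_in_balls[OF assms(3)] by blast
  have "?A \<subseteq> ?B"
    using union_cball_subset_norm_le[OF finite_set, of ?r xs, unfolded add.assoc[symmetric]]
    by blast
  have norm_bound: "(INF y\<in>?B. r_f f y xs) = (INF y\<in>?A. r_f f y xs)"
    using cINF_eq_between[OF \<open>?A \<subseteq> ?B\<close> _ \<open>?A \<noteq> {}\<close> bdd_below_r_f[OF assms(4)]
        rad[unfolded rad_f_def]]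
    by blast
  have diam_eq: "?r + diameter (set xs) = cheb_rad Y xs + diameter (set xs) + \<epsilon>"
    by simp
  have balls_subset: "?A \<subseteq> (\<Inter>x\<in>set xs. cball x (cheb_rad Y xs + diameter (set xs) + \<epsilon>)) \<inter> Y"
    using union_cball_subset_Inter_cball[OF finite_imp_bounded[OF finite_set[of xs]], of ?r]
    unfolding diam_eq by (rule Int_mono) simp
  note cent = Cent_f_subset_balls[OF assms(4) _ near]
  show ?thesis
    using rad norm_bound[symmetric] cent order_trans[OF cent balls_subset]
    by (intro conjI impI) assumption+
qed

end
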